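(* Let $p,q,s$ be complex numbers with $p\neq0$, $q\neq 0$, $s^2\neq -1$. Let $\tilde A$ be the unital complex algebra generated by $\xi,\eta,\zeta,U,V,Z$ subject to the relations $$\zeta\xi=q^2\xi\zeta,\quad \eta\zeta=q^2\zeta\eta,\quad \xi U=pU\xi,\quad V\xi=p\xi V,\quad \eta V=pV\eta,\quad U\eta=p\eta U,$$ $$UV=VU,\quad U\zeta=\zeta U,\quad V\zeta=\zeta V,$$ $$\xi\eta=(\zeta-1)(\zeta+s^2)+UV,\qquad \eta\xi=(q^2\zeta-1)(q^2\zeta+s^2)+UV,$$ with $Z$ central and $Z^2=UV$. Let $$\tilde e=\frac{1}{2(1+s^2)}\begin{pmatrix}1+s^2+2Z&0&1-s^2-2\zeta&2\xi\\ 0&1+s^2+2Z&-2\eta&s^2-1+2q^2\zeta\\ 1-s^2-2\zeta&2\xi&1+s^2-2Z&0\\ -2\eta&s^2-1+2q^2\zeta&0&1+s^2-2Z\end{pmatrix}\in\mathrm{Mat}_4(\tilde A),$$ and let $\tilde E$ be the projective module defined by $\tilde e$. Then $ch_k(\tilde E)=0$ for all $k=0,1,2,\ldots$.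
   Context: For a projector $e=(e_{ij})\in\mathrm{Mat}_N(A)$ over a unital algebra $A$, the components of its Chern–Connes character are $$ch_n(E)=c_n\sum_{i_1,\dots,i_{2n+1}}\big(e-\tfrac12\mathbf 1\big)_{i_1i_2}\otimes\bar e_{i_2i_3}\otimes\bar e_{i_3i_4}\otimes\cdots\otimes\bar e_{i_{2n+1}i_1}\in A\otimes (A/\mathbb C1)^{\otimes 2n},$$ where $\bar e_{ij}$ denotes the image of $e_{ij}$ in $A/\mathbb C1$ and $c_n$ are nonzero normalisation constants. *)

theory Defs
  imports Complex_Main "HOL-Library.Poly_Mapping"
begin

datatype gen = Xi | Eta | Zeta | GU | GV | GZ

datatype word = W "gen list"

instantiation word :: monoid_add
begin
definition zero_word_def: "0 = W []"
fun plus_word :: "word \<Rightarrow> word \<Rightarrow> word" where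
  "plus_word (W a) (W b) = W (a @ b)"
instance
proof
  fix a b c :: word
  show "a + b + c = a + (b + c)" by (cases a; cases b; cases c) simp
  show "0 + a = a" by (cases a) (simp add: zero_word_def)
  show "a + 0 = a" by (cases a) (simp add: zero_word_def)
qed
end

text \<open>The free unital complex algebra: finitely supported functions on words,
  with convolution product (monoid algebra of the free monoid).\<close>
type_synonym falg = "word \<Rightarrow>\<^sub>0 complex"

definition smult :: "complex \<Rightarrow> ('a \<Rightarrow>\<^sub>0 complex) \<Rightarrow> ('a \<Rightarrow>\<^sub>0 complex)" where
  "smult c x = Poly_Mapping.map ((*) c) x"

definition sc :: "complex \<Rightarrow> falg" where
  "sc c = Poly_Mapping.single 0 c"

definition mono :: "word \<Rightarrow> falg" where
  "mono w = Poly_Mapping.single w 1"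

definition g :: "gen \<Rightarrow> falg" where
  "g x = mono (W [x])"

inductive_set cspan :: "('a \<Rightarrow>\<^sub>0 complex) set \<Rightarrow> ('a \<Rightarrow>\<^sub>0 complex) set" for S where
  zero: "0 \<in> cspan S"
| base: "x \<in> S \<Longrightarrow> x \<in> cspan S"
| add: "x \<in> cspan S \<Longrightarrow> y \<in> cspan S \<Longrightarrow> x + y \<in> cspan S"
| scal: "x \<in> cspan S \<Longrightarrow> smult c x \<in> cspan S"

definition rels :: "complex \<Rightarrow> complex \<Rightarrow> complex \<Rightarrow> falg set" where
  "rels p q s = {
     g Zeta * g Xi - sc (q^2) * g Xi * g Zeta,
     g Eta * g Zeta - sc (q^2) * g Zeta * g Eta,
     g Xi * g GU - sc p * g GU * g Xi,
     g GV * g Xi - sc p * g Xi * g GV,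
     g Eta * g GV - sc p * g GV * g Eta,
     g GU * g Eta - sc p * g Eta * g GU,
     g GU * g GV - g GV * g GU,
     g GU * g Zeta - g Zeta * g GU,
     g GV * g Zeta - g Zeta * g GV,
     g Xi * g Eta - ((g Zeta - 1) * (g Zeta + sc (s^2)) + g GU * g GV),
     g Eta * g Xi - ((sc (q^2) * g Zeta - 1) * (sc (q^2) * g Zeta + sc (s^2)) + g GU * g GV),
     g GZ * g GZ - g GU * g GV }
   \<union> {g GZ * g x - g x * g GZ | x. True}"

text \<open>Two-sided ideal generated by the relations; \<open>\<tilde>A\<close> = free algebra / this ideal.\<close>
definition rel_ideal :: "complex \<Rightarrow> complex \<Rightarrow> complex \<Rightarrow> falg set" where
  "rel_ideal p q s = cspan {mono u * r * mono v | u v r. r \<in> rels p q s}"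

text \<open>The tensor power of the free algebra with m factors is modelled as finitely
  supported functions on lists of words of length m (basis: tuples of words).
  \<open>tens fs\<close> is the pure tensor \<open>fs!0 \<otimes> ... \<otimes> fs!(m-1)\<close>.\<close>
fun tens :: "falg list \<Rightarrow> (word list \<Rightarrow>\<^sub>0 complex)" where
  "tens [] = Poly_Mapping.single [] 1"
| "tens (f # fs) = (\<Sum>w\<in>Poly_Mapping.keys f. \<Sum>ws\<in>Poly_Mapping.keys (tens fs).
      Poly_Mapping.single (w # ws) (Poly_Mapping.lookup f w * Poly_Mapping.lookup (tens fs) ws))"

text \<open>Kernel of the canonical map from the (2n+1)-fold tensor power of the free algebra
  onto \<open>\<tilde>A \<otimes> (\<tilde>A/\<complex>1)^{\<otimes>2n}\<close>: spanned by pure tensors having some factor in the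
  relation ideal, or some factor in position \<open>\<ge> 1\<close> a scalar multiple of 1.\<close>
definition chern_kernel :: "complex \<Rightarrow> complex \<Rightarrow> complex \<Rightarrow> nat \<Rightarrow> (word list \<Rightarrow>\<^sub>0 complex) set" where
  "chern_kernel p q s n = cspan
     ({tens fs | fs. length fs = 2*n+1 \<and> (\<exists>i<length fs. fs!i \<in> rel_ideal p q s)}
    \<union> {tens fs | fs. length fs = 2*n+1 \<and> (\<exists>i c. 1 \<le> i \<and> i < length fs \<and> fs!i = sc c)})"

text \<open>For an N x N matrix e (indices 0..N-1) with entries (representatives) in the free
  algebra, the lift of
  \<open>c_n \<Sum> (e - 1/2)_{i1 i2} \<otimes> e_{i2 i3} \<otimes> ... \<otimes> e_{i(2n+1) i1}\<close>.\<close>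
definition chern :: "(nat \<Rightarrow> complex) \<Rightarrow> nat \<Rightarrow> (nat \<Rightarrow> nat \<Rightarrow> falg) \<Rightarrow> nat \<Rightarrow> (word list \<Rightarrow>\<^sub>0 complex)" where
  "chern c N e n = (let m = 2*n+1 in
     smult (c n) (\<Sum>is\<in>{is. length is = m \<and> set is \<subseteq> {..<N}}.
        tens (map (\<lambda>k. (if k = 0 then e (is!0) (is!(1 mod m)) - (if is!0 = is!(1 mod m) then sc (1/2) else 0)
                        else e (is!k) (is!((k+1) mod m)))) [0..<m])))"

definition etilde :: "complex \<Rightarrow> complex \<Rightarrow> nat \<Rightarrow> nat \<Rightarrow> falg" where
  "etilde q s i j = sc (1 / (2 * (1 + s^2))) *
    (if (i,j) = (0,0) then sc (1 + s^2) + sc 2 * g GZ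
     else if (i,j) = (0,2) then sc (1 - s^2) - sc 2 * g Zeta
     else if (i,j) = (0,3) then sc 2 * g Xi
     else if (i,j) = (1,1) then sc (1 + s^2) + sc 2 * g GZ
     else if (i,j) = (1,2) then - (sc 2 * g Eta)
     else if (i,j) = (1,3) then sc (s^2 - 1) + sc (2 * q^2) * g Zeta
     else if (i,j) = (2,0) then sc (1 - s^2) - sc 2 * g Zeta
     else if (i,j) = (2,1) then sc 2 * g Xi
     else if (i,j) = (2,2) then sc (1 + s^2) - sc 2 * g GZ
     else if (i,j) = (3,0) then - (sc 2 * g Eta)
     else if (i,j) = (3,1) then sc (s^2 - 1) + sc (2 * q^2) * g Zeta
     else if (i,j) = (3,3) then sc (1 + s^2) - sc 2 * g GZ
     else 0)"

end

theory Submission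
  imports Defs
begin

text \<open>
  Put \<open>a = \<tilde>e - 1/2\<close>, \<open>\<tau> i = (i + 2) mod 4\<close> and \<open>u = (1, 1, -1, -1)\<close>. The 2x2 block
  shape of \<open>\<tilde>e\<close> gives \<open>a (\<tau> i) (\<tau> j) = - u i u j a i j\<close>: swapping the two block rows and
  columns fixes the off-diagonal blocks (the diagonal blocks are diagonal), and flips the sign of
  the diagonal entries \<open>\<plusminus>Z/(1+s^2)\<close>. Reindexing a cyclic term
  \<open>a i\<^sub>1 i\<^sub>2 \<otimes> ... \<otimes> a i\<^sub>m i\<^sub>1\<close> by \<open>\<tau>\<close> therefore multiplies it by \<open>(-1)^m \<Prod> u\<^sub>k^2 = -1\<close>
  for odd \<open>m = 2n+1\<close>, so the cyclic sum of \<open>a\<close> vanishes already in the tensor power of the free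
  algebra. The Chern character differs from that sum only by the scalars \<open>1/2\<close> in the factors
  after the first, i.e. by tensors lying in the kernel.
\<close>

lemma lookup_smult [simp]: "Poly_Mapping.lookup (smult c x) w = c * Poly_Mapping.lookup x w"
  by (simp add: smult_def map.rep_eq when_def)

lemma smult_minus_one: "smult (-1) x = - x"
  by (rule poly_mapping_eqI) simp

lemma smult_one: "smult 1 x = x"
  by (rule poly_mapping_eqI) simp

lemma smult_zero_right: "smult c 0 = 0"
  by (rule poly_mapping_eqI) simp

lemma sc_zero [simp]: "sc 0 = 0"
  by (simp add: sc_def)

lemma cspan_sum: "finite A \<Longrightarrow> (\<And>x. x \<in> A \<Longrightarrow> f x \<in> cspan S) \<Longrightarrow> sum f A \<in> cspan S"
  by (induction A rule: finite_induct) (auto intro: cspan.intros)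

lemma lookup_tens: "Poly_Mapping.lookup (tens fs) ws =
   (if length ws = length fs then (\<Prod>i<length fs. Poly_Mapping.lookup (fs!i) (ws!i)) else 0)"
proof (induction fs arbitrary: ws)
  case Nil
  then show ?case by (cases ws) (auto simp: lookup_single when_def)
next
  case (Cons f fs)
  show ?case
  proof (cases ws)
    case Nil
    then show ?thesis by (simp add: lookup_sum lookup_single when_def)
  next
    case (Cons w0 ws0)
    have "(\<Sum>vs\<in>Poly_Mapping.keys (tens fs).
            Poly_Mapping.lookup (Poly_Mapping.single (w # vs) (Poly_Mapping.lookup f w * Poly_Mapping.lookup (tens fs) vs)) ws)
        = (if w = w0 then Poly_Mapping.lookup f w * Poly_Mapping.lookup (tens fs) ws0 else 0)" for w
      by (cases "ws0 \<in> Poly_Mapping.keys (tens fs)") (auto simp: in_keys_iff lookup_single when_def Cons)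
    then have "Poly_Mapping.lookup (tens (f # fs)) ws = Poly_Mapping.lookup f w0 * Poly_Mapping.lookup (tens fs) ws0"
      by (cases "w0 \<in> Poly_Mapping.keys f") (auto simp: lookup_sum in_keys_iff)
    then show ?thesis
      using Cons.IH [of ws0] Cons by (simp del: prod.lessThan_Suc add: prod.lessThan_Suc_shift)
  qed
qed

lemma tens_list_update_add:
  assumes "i < length fs"
  shows "tens (fs[i := a + b]) = tens (fs[i := a]) + tens (fs[i := b])"
proof (rule poly_mapping_eqI)
  fix ws
  have "(\<Prod>k<length fs. Poly_Mapping.lookup (fs[i := x] ! k) (ws ! k))
     = Poly_Mapping.lookup x (ws!i) * (\<Prod>k\<in>{..<length fs}-{i}. Poly_Mapping.lookup (fs ! k) (ws ! k))" for x
    using assms by (subst prod.remove [of _ i]) (auto intro!: prod.cong)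
  then show "Poly_Mapping.lookup (tens (fs[i := a + b])) ws =
      Poly_Mapping.lookup (tens (fs[i := a]) + tens (fs[i := b])) ws"
    by (simp add: lookup_add lookup_tens distrib_right)
qed

lemma tens_smult:
  "tens (map (\<lambda>k. smult (c k) (f k)) [0..<m]) = smult (\<Prod>k<m. c k) (tens (map f [0..<m]))"
  by (rule poly_mapping_eqI) (simp add: lookup_tens prod.distrib)

lemma tens_scalar_slot_mem_chern_kernel:
  assumes "length fs = 2*n+1" "1 \<le> i" "i < 2*n+1"
  shows "tens (fs[i := sc d]) \<in> chern_kernel p q s n"
  unfolding chern_kernel_def using assms by (intro cspan.base UnI2) force

lemma tens_diff_mem_chern_kernel:
  assumes len: "length fs = 2*n+1" "length gs = 2*n+1" and head: "fs!0 = gs!0"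
    and scalar: "\<And>i. 1 \<le> i \<Longrightarrow> i < 2*n+1 \<Longrightarrow> \<exists>d. fs!i = gs!i + sc d"
  shows "tens fs - tens gs \<in> chern_kernel p q s n"
proof -
  have "tens fs - tens (take j gs @ drop j fs) \<in> chern_kernel p q s n" if "j \<le> 2*n+1" for j
    using that
  proof (induction j)
    case 0
    then show ?case by (simp add: chern_kernel_def cspan.zero)
  next
    case (Suc j)
    define hs where "hs = take j gs @ drop j fs"
    have j: "j < 2*n+1" using Suc.prems by simp
    have hs_j: "hs!j = fs!j" and len_hs: "length hs = 2*n+1"
      using j len by (simp_all add: hs_def nth_append)
    have "take (Suc j) gs @ drop (Suc j) fs = hs[j := gs!j]"
      using j len by (simp add: hs_def take_Suc_conv_app_nth list_update_append flip: Cons_nth_drop_Suc)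
    moreover have "tens hs - tens (hs[j := gs!j]) \<in> chern_kernel p q s n"
    proof (cases "j = 0")
      case True
      then have "hs[j := gs!j] = hs" using hs_j head by (metis list_update_id)
      then show ?thesis by (simp add: chern_kernel_def cspan.zero)
    next
      case False
      then obtain d where "hs!j = gs!j + sc d" using scalar j hs_j by force
      then have "tens hs = tens (hs[j := gs!j]) + tens (hs[j := sc d])"
        using tens_list_update_add [of j hs] j len_hs by (metis list_update_id)
      then show ?thesis
        using tens_scalar_slot_mem_chern_kernel [of hs n j] False j len_hs by simp
    qed
    moreover have "tens fs - tens hs \<in> chern_kernel p q s n"
      using Suc by (simp add: hs_def)
    ultimately show ?case
      unfolding chern_kernel_def using cspan.add by fastforce
  qed
  from this [of "2*n+1"] show ?thesis using len by simp
qed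

definition cyclic_tensor :: "(nat \<Rightarrow> nat \<Rightarrow> falg) \<Rightarrow> nat list \<Rightarrow> (word list \<Rightarrow>\<^sub>0 complex)" where
  "cyclic_tensor a is = tens (map (\<lambda>k. a (is!k) (is!((k+1) mod length is))) [0..<length is])"

lemma prod_lessThan_rotate: "(\<Prod>k<m. h ((k+1) mod m)) = (\<Prod>k<(m::nat). h k :: 'a :: comm_monoid_mult)"
proof (cases m)
  case (Suc m')
  have "(\<Prod>k<Suc m'. h ((k+1) mod Suc m')) = (\<Prod>k<m'. h (Suc k)) * h 0"
    by (simp del: prod.lessThan_Suc_shift add: prod.lessThan_Suc)
  also have "\<dots> = (\<Prod>k<Suc m'. h k)"
    by (simp del: prod.lessThan_Suc add: prod.lessThan_Suc_shift mult.commute)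
  finally show ?thesis using Suc by simp
qed simp

lemma cyclic_sign_product:
  fixes u :: "nat \<Rightarrow> complex"
  assumes "odd m" and "\<And>k. k < m \<Longrightarrow> u k ^ 2 = 1"
  shows "(\<Prod>k<m. - (u k * u ((k+1) mod m))) = -1"
proof -
  have "(\<Prod>k<m. - (u k * u ((k+1) mod m))) = (-1) ^ m * ((\<Prod>k<m. u k) * (\<Prod>k<m. u ((k+1) mod m)))"
    by (simp add: prod_uminus prod.distrib)
  also have "\<dots> = (-1) ^ m * (\<Prod>k<m. u k ^ 2)"
    unfolding prod_lessThan_rotate by (simp add: power2_eq_square prod.distrib)
  finally show ?thesis using assms by simp
qed

lemma bij_betw_map_lists_length:
  assumes "bij_betw f A A"
  shows "bij_betw (map f) {xs. length xs = m \<and> set xs \<subseteq> A} {xs. length xs = m \<and> set xs \<subseteq> A}"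
  using assms [unfolded bij_betw_def]
  by (intro bij_betw_byWitness [where f' = "map (inv_into A f)"])
    (auto intro!: map_idI inv_into_into simp: subset_iff f_inv_into_f, blast)

lemma cyclic_tensor_sum_eq_zero:
  fixes a :: "nat \<Rightarrow> nat \<Rightarrow> falg" and u :: "nat \<Rightarrow> complex"
  assumes perm: "bij_betw \<tau> A A" and sign: "\<And>i. i \<in> A \<Longrightarrow> u i ^ 2 = 1"
    and twisted: "\<And>i j. i \<in> A \<Longrightarrow> j \<in> A \<Longrightarrow> a (\<tau> i) (\<tau> j) = smult (- (u i * u j)) (a i j)"
    and "odd m"
  shows "(\<Sum>is\<in>{is. length is = m \<and> set is \<subseteq> A}. cyclic_tensor a is) = 0"
proof -
  define I where "I = {is. length is = m \<and> set is \<subseteq> A}"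
  have flip: "cyclic_tensor a (map \<tau> is) = - cyclic_tensor a is" if "is \<in> I" for "is"
  proof -
    have "m > 0" using \<open>odd m\<close> by (rule odd_pos)
    have "a (map \<tau> is ! k) (map \<tau> is ! ((k+1) mod m))
        = smult (- (u (is!k) * u (is!((k+1) mod m)))) (a (is!k) (is!((k+1) mod m)))" if "k < m" for k
      using that \<open>m > 0\<close> \<open>is \<in> I\<close> by (auto simp: I_def intro!: twisted subsetD [OF _ nth_mem] mod_less_divisor)
    then have "cyclic_tensor a (map \<tau> is) = tens (map (\<lambda>k. smult (- (u (is!k) * u (is!((k+1) mod m))))
        (a (is!k) (is!((k+1) mod m)))) [0..<m])"
      using that unfolding cyclic_tensor_def length_map I_def
      by (intro arg_cong [where f = tens] map_cong) auto
    also have "\<dots> = smult (-1) (cyclic_tensor a is)"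
      using that \<open>odd m\<close> \<open>m > 0\<close> cyclic_sign_product [of m "\<lambda>k. u (is!k)"]
      by (simp add: tens_smult cyclic_tensor_def I_def subset_iff sign)
    finally show ?thesis by (simp add: smult_minus_one)
  qed
  have "(\<Sum>is\<in>I. cyclic_tensor a is) = (\<Sum>is\<in>I. cyclic_tensor a (map \<tau> is))"
    unfolding I_def by (rule sum.reindex_bij_betw [OF bij_betw_map_lists_length [OF perm], symmetric])
  also have "\<dots> = - (\<Sum>is\<in>I. cyclic_tensor a is)"
    by (simp add: flip sum_negf)
  finally have sum_eq_neg: "(\<Sum>is\<in>I. cyclic_tensor a is) = - (\<Sum>is\<in>I. cyclic_tensor a is)" .
  have "Poly_Mapping.lookup (\<Sum>is\<in>I. cyclic_tensor a is) w = 0" for w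
    using arg_cong [OF sum_eq_neg, of "\<lambda>x. Poly_Mapping.lookup x w"] by simp
  then show ?thesis unfolding I_def by (intro poly_mapping_eqI) simp
qed

definition centered :: "(nat \<Rightarrow> nat \<Rightarrow> falg) \<Rightarrow> nat \<Rightarrow> nat \<Rightarrow> falg" where
  "centered e i j = e i j - (if i = j then sc (1/2) else 0)"

lemma centered_add_sc: "e i j = centered e i j + sc (if i = j then 1/2 else 0)"
  by (simp add: centered_def sc_def)

lemma chern_mem_chern_kernel:
  assumes "(\<Sum>is\<in>{is. length is = 2*n+1 \<and> set is \<subseteq> {..<N}}. cyclic_tensor (centered e) is) = 0"
  shows "chern c N e n \<in> chern_kernel p q s n"
proof -
  define m where "m = 2*n+1"
  define I where "I = {is. length is = m \<and> set is \<subseteq> {..<N}}"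
  define F where "F is = tens (map (\<lambda>k. if k = 0
      then e (is!0) (is!(1 mod m)) - (if is!0 = is!(1 mod m) then sc (1/2) else 0)
      else e (is!k) (is!((k+1) mod m))) [0..<m])" for "is"
  have "finite I"
    using finite_lists_length_eq [of "{..<N}" m] by (simp add: I_def conj_commute)
  have "F is - cyclic_tensor (centered e) is \<in> chern_kernel p q s n" if "is \<in> I" for "is"
    using that centered_add_sc [of e] unfolding F_def cyclic_tensor_def
    by (intro tens_diff_mem_chern_kernel) (auto simp: I_def m_def simp del: upt_Suc intro: sc_zero)
  then have "sum F I \<in> chern_kernel p q s n"
    using cspan_sum [OF \<open>finite I\<close>, of "\<lambda>is. F is - cyclic_tensor (centered e) is"] assms
    by (simp add: sum_subtractf I_def m_def chern_kernel_def)
  moreover have "chern c N e n = smult (c n) (sum F I)"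
    unfolding chern_def F_def I_def m_def Let_def ..
  ultimately show ?thesis
    unfolding chern_kernel_def by (simp add: cspan.scal)
qed

lemma less_four_cases: "i < (4::nat) \<Longrightarrow> i = 0 \<or> i = 1 \<or> i = 2 \<or> i = 3"
  by auto

lemma etilde_shift_off_diagonal:
  assumes "i < 4" "j < 4" "i \<noteq> j"
  shows "etilde q s ((i + 2) mod 4) ((j + 2) mod 4) = etilde q s i j"
  using less_four_cases [OF assms(1)] less_four_cases [OF assms(2)] assms(3)
  by (elim disjE) (simp_all add: etilde_def)

lemma sc_mult_sc_plus:
  assumes "a * t = b"
  shows "sc a * (sc t + y) = sc b + sc a * y" and "sc a * (sc t - y) = sc b - sc a * y"
  using assms by (simp_all add: distrib_left right_diff_distrib sc_def mult_single)

lemma centered_etilde_shift_diagonal: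
  assumes "s^2 \<noteq> -1" "i < 4"
  shows "centered (etilde q s) ((i + 2) mod 4) ((i + 2) mod 4) = - centered (etilde q s) i i"
proof -
  \<comment> \<open>stated in the simp normal form of the prefactor \<open>1 / (2 * (1 + s^2))\<close> of \<open>etilde\<close>\<close>
  have half: "1 / (2 + 2 * s^2) * (1 + s^2) = 1/2"
    using assms(1) by (simp add: add_eq_0_iff field_simps)
  from less_four_cases [OF assms(2)] show ?thesis
    by (elim disjE) (simp_all add: centered_def etilde_def sc_mult_sc_plus [OF half])
qed

lemma etilde_diagonal_block_off_diagonal:
  assumes "i < 4" "j < 4" "i \<noteq> j" "i div 2 = j div 2"
  shows "etilde q s i j = 0"
proof -
  have "i = 0 \<and> j = 1 \<or> i = 1 \<and> j = 0 \<or> i = 2 \<and> j = 3 \<or> i = 3 \<and> j = 2"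
    using assms less_four_cases [of i] less_four_cases [of j] by auto
  then show ?thesis by (elim disjE conjE) (simp_all add: etilde_def)
qed

definition block_sign :: "nat \<Rightarrow> complex" where
  "block_sign i = (if i < 2 then 1 else -1)"

lemma block_sign_squared: "block_sign i ^ 2 = 1"
  by (simp add: block_sign_def)

lemma centered_etilde_twisted:
  assumes "s^2 \<noteq> -1" "i < 4" "j < 4"
  shows "centered (etilde q s) ((i + 2) mod 4) ((j + 2) mod 4) =
    smult (- (block_sign i * block_sign j)) (centered (etilde q s) i j)"
proof (cases "i = j")
  case True
  then show ?thesis
    using centered_etilde_shift_diagonal [OF assms(1,2)] by (simp add: block_sign_def smult_minus_one)
next
  case False
  have "(i + 2) mod 4 \<noteq> (j + 2) mod 4"
    using assms(2,3) False less_four_cases [of i] less_four_cases [of j] by auto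
  then have shift: "centered (etilde q s) ((i + 2) mod 4) ((j + 2) mod 4) = etilde q s i j"
    using etilde_shift_off_diagonal [OF assms(2,3) False] by (simp add: centered_def)
  show ?thesis
  proof (cases "i div 2 = j div 2")
    case True
    then show ?thesis
      using shift etilde_diagonal_block_off_diagonal [OF assms(2,3) False] False
      by (simp add: centered_def smult_zero_right)
  next
    case False
    then have "(i < 2) \<noteq> (j < 2)" using assms(2,3) less_four_cases [of i] less_four_cases [of j] by auto
    then have "block_sign i * block_sign j = -1" by (auto simp: block_sign_def)
    then show ?thesis using shift \<open>i \<noteq> j\<close> by (simp add: centered_def smult_one)
  qed
qed

theorem mainTheorem4:
  fixes p q s :: complex and c :: "nat \<Rightarrow> complex"
  assumes "p \<noteq> 0" and "q \<noteq> 0" and "s^2 \<noteq> -1"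
    and "\<forall>n. c n \<noteq> 0"
  shows "\<forall>k. chern c 4 (etilde q s) k \<in> chern_kernel p q s k"
proof
  fix n
  have "(\<Sum>is\<in>{is. length is = 2*n+1 \<and> set is \<subseteq> {..<4}}. cyclic_tensor (centered (etilde q s)) is) = 0"
  proof (rule cyclic_tensor_sum_eq_zero)
    show "bij_betw (\<lambda>i. (i + 2) mod 4) {..<4::nat} {..<4}"
      by (rule bij_betw_byWitness [where f' = "\<lambda>i. (i + 2) mod 4"]) (auto dest: less_four_cases)
    show "centered (etilde q s) ((i + 2) mod 4) ((j + 2) mod 4) =
        smult (- (block_sign i * block_sign j)) (centered (etilde q s) i j)" if "i \<in> {..<4}" "j \<in> {..<4}" for i j
      using that by (intro centered_etilde_twisted [OF assms(3)]) simp_all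
  qed (simp_all add: block_sign_squared)
  then show "chern c 4 (etilde q s) n \<in> chern_kernel p q s n"
    by (rule chern_mem_chern_kernel)
qed

end
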